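(* In a large society in which the mean-field and wisdom assumptions hold, a shock election can occur with confirmation bias ($q>0$), but never occurs without confirmation bias ($q=0$).
   Context: There are $n$ voters communicating through a network $T$ (an $n\times n$ row-stochastic matrix, strongly connected and aperiodic); under confirmation bias $q\in[0,1]$ they communicate through $T^*$, defined by: for $j\ne i$, if $|x_{i0}-x_{j0}|>1-q$ then $T^*_{ij}=0$ and $T_{ij}$ is added to $T^*_{ii}$, otherwise $T^*_{ij}=T_{ij}$ ($T^*$ strongly connected). Beliefs evolve by $x_t=T^*x_{t-1}$. Two candidates have ideologies $0$ ("Left") and $1$ ("Right"). Each voter's initial belief lies in $\{x_{EL},x_{CL},x_S,x_{CR},x_{ER}\}$ with $x_{EL}<x_{CL}<x_S=\tfrac12<x_{CR}<x_{ER}$; $f_k\in(0,1)$ is the fraction with belief $x_k$, $\sum_k f_k=1$, and it is assumed $f_{EL}+f_{CL}>f_{CR}+f_{ER}$ and $\sum_k x_k f_k<\tfrac12$. In an election at time $t$, voter $i$ votes Left if $x_{it}<\tfrac12$, Right if $x_{it}>\tfrac12$, and each with probability $\tfrac12$ if $x_{it}=\tfrac12$; the candidate with most votes wins (ties by coin toss). Wisdom: every agent's influence (entry of the left eigenvector for eigenvalue 1 of the network, normalized to sum 1) is $O(1/n)$. Mean-field assumption: for every $i$, the average initial belief of $i$'s neighbours (other than $i$) is approximately the society mean $\mu$, and initial beliefs are independent of link weights. A shock election occurs if there is a time $0<t<\infty$ at which the Right wins the election. *)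

theory Defs
  imports Main "HOL.Real"
begin

text \<open>Matrices are functions nat => nat => real on the index set {0..<n}.
  Type k (k < 5) stands for EL, CL, S, CR, ER in this order.\<close>

fun mpow :: "nat \<Rightarrow> (nat \<Rightarrow> nat \<Rightarrow> real) \<Rightarrow> nat \<Rightarrow> nat \<Rightarrow> nat \<Rightarrow> real" where
  "mpow n T 0 i j = (if i = j then 1 else 0)"
| "mpow n T (Suc t) i j = (\<Sum>l<n. T i l * mpow n T t l j)"

definition row_stochastic :: "nat \<Rightarrow> (nat \<Rightarrow> nat \<Rightarrow> real) \<Rightarrow> bool" where
  "row_stochastic n T \<longleftrightarrow> (\<forall>i<n. (\<forall>j<n. 0 \<le> T i j) \<and> (\<Sum>j<n. T i j) = 1)"

definition strongly_connected :: "nat \<Rightarrow> (nat \<Rightarrow> nat \<Rightarrow> real) \<Rightarrow> bool" where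
  "strongly_connected n T \<longleftrightarrow> (\<forall>i<n. \<forall>j<n. \<exists>t. 0 < mpow n T t i j)"

definition aperiodic :: "nat \<Rightarrow> (nat \<Rightarrow> nat \<Rightarrow> real) \<Rightarrow> bool" where
  "aperiodic n T \<longleftrightarrow> (\<forall>i<n. Gcd {t. 0 < t \<and> 0 < mpow n T t i i} = 1)"

definition influence :: "nat \<Rightarrow> (nat \<Rightarrow> nat \<Rightarrow> real) \<Rightarrow> (nat \<Rightarrow> real) \<Rightarrow> bool" where
  "influence n T s \<longleftrightarrow> (\<forall>i<n. 0 \<le> s i) \<and> (\<Sum>i<n. s i) = 1 \<and>
     (\<forall>j<n. (\<Sum>i<n. s i * T i j) = s j)"

definition wise :: "real \<Rightarrow> nat \<Rightarrow> (nat \<Rightarrow> nat \<Rightarrow> real) \<Rightarrow> bool" where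
  "wise C n T \<longleftrightarrow> (\<exists>s. influence n T s \<and> (\<forall>i<n. s i \<le> C / real n))"

definition tstar :: "nat \<Rightarrow> real \<Rightarrow> (nat \<Rightarrow> real) \<Rightarrow> (nat \<Rightarrow> nat \<Rightarrow> real) \<Rightarrow> nat \<Rightarrow> nat \<Rightarrow> real" where
  "tstar n q x0 T i j =
     (if i \<noteq> j then (if \<bar>x0 i - x0 j\<bar> > 1 - q then 0 else T i j)
      else T i i + (\<Sum>l\<in>{l. l < n \<and> l \<noteq> i \<and> \<bar>x0 i - x0 l\<bar> > 1 - q}. T i l))"

definition belief :: "nat \<Rightarrow> (nat \<Rightarrow> nat \<Rightarrow> real) \<Rightarrow> (nat \<Rightarrow> real) \<Rightarrow> nat \<Rightarrow> nat \<Rightarrow> real" where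
  "belief n T x0 t i = (\<Sum>j<n. mpow n T t i j * x0 j)"

definition left_votes :: "nat \<Rightarrow> (nat \<Rightarrow> real) \<Rightarrow> nat" where
  "left_votes n x = card {i. i < n \<and> x i < 1/2}"
definition right_votes :: "nat \<Rightarrow> (nat \<Rightarrow> real) \<Rightarrow> nat" where
  "right_votes n x = card {i. i < n \<and> x i > 1/2}"
definition indiff_votes :: "nat \<Rightarrow> (nat \<Rightarrow> real) \<Rightarrow> nat" where
  "indiff_votes n x = card {i. i < n \<and> x i = 1/2}"

text \<open>Probability that the Right wins when L voters vote Left, R vote Right and U
  voters each vote by an independent fair coin; ties are broken by a fair coin.\<close>
definition right_win_prob :: "nat \<Rightarrow> nat \<Rightarrow> nat \<Rightarrow> real" where
  "right_win_prob L R U = (\<Sum>k\<le>U. real (U choose k) / 2 ^ U *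
      (if R + k > L + (U - k) then 1 else if R + k = L + (U - k) then 1/2 else 0))"

definition prob_right_wins :: "nat \<Rightarrow> (nat \<Rightarrow> real) \<Rightarrow> real" where
  "prob_right_wins n x = right_win_prob (left_votes n x) (right_votes n x) (indiff_votes n x)"

definition params_ok :: "(nat \<Rightarrow> real) \<Rightarrow> (nat \<Rightarrow> real) \<Rightarrow> bool" where
  "params_ok xk f \<longleftrightarrow>
     0 \<le> xk 0 \<and> xk 0 < xk 1 \<and> xk 1 < xk 2 \<and> xk 2 = 1/2 \<and> xk 2 < xk 3 \<and> xk 3 < xk 4 \<and> xk 4 \<le> 1 \<and>
     (\<forall>k<5. 0 < f k \<and> f k < 1) \<and> (\<Sum>k<5. f k) = 1 \<and>
     f 0 + f 1 > f 3 + f 4 \<and> (\<Sum>k<5. xk k * f k) < 1/2"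

definition society :: "(nat \<Rightarrow> real) \<Rightarrow> (nat \<Rightarrow> real) \<Rightarrow> nat \<Rightarrow> (nat \<Rightarrow> real) \<Rightarrow> bool" where
  "society xk f n x0 \<longleftrightarrow> (\<forall>i<n. \<exists>k<5. x0 i = xk k) \<and>
     (\<forall>k<5. real (card {i. i < n \<and> x0 i = xk k}) = f k * real n)"

definition mean_field :: "real \<Rightarrow> nat \<Rightarrow> (nat \<Rightarrow> nat \<Rightarrow> real) \<Rightarrow> (nat \<Rightarrow> real) \<Rightarrow>
     (nat \<Rightarrow> real) \<Rightarrow> (nat \<Rightarrow> real) \<Rightarrow> bool" where
  "mean_field eps n T x0 xk f \<longleftrightarrow> (\<forall>t. \<forall>i<n. \<forall>k<5.
     \<bar>(\<Sum>j\<in>{j. j < n \<and> j \<noteq> i \<and> x0 j = xk k}. mpow n T t i j) - (1 - mpow n T t i i) * f k\<bar>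
       \<le> eps * (1 - mpow n T t i i))"

end

theory Submission
  imports Defs
begin

text \<open>Without bias (q = 0) nobody is ignored, because all beliefs lie in [0, 1], so T* = T.
  By the mean-field assumption voter i then holds at time t > 0 the belief
  m x_i + (1 - m)(mu + O(eps)), where m = (T^t)_ii and mu < 1/2 is the society mean.
  Aperiodicity and strong connectivity force m < 1, so everybody starting at or below 1/2
  ends strictly below 1/2, and the Left keeps the majority f_EL + f_CL > f_CR + f_ER.

  With bias the complete uniform network is wise and satisfies the mean-field condition up to
  an error of order 1/n. Take levels 0, 3/10, 1/2, 3/4, 1 with fractions 1/4, 1/10, 7/20,
  3/20, 3/20 and q = 13/20: then centrists ignore both extremes and CR, ER voters ignore the
  whole Left, so after one step the 65 percent of S, CR and ER voters lie above 1/2.\<close>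

section \<open>Powers of nonnegative matrices\<close>

lemma mpow_nonneg:
  assumes "\<forall>a<n. \<forall>b<n. 0 \<le> A a b" and "i < n"
  shows "0 \<le> mpow n A t i j"
  using assms(2)
  by (induction t arbitrary: i) (auto simp: assms(1) intro!: sum_nonneg)

lemma mpow_1: "j < n \<Longrightarrow> mpow n A 1 i j = A i j"
  by (simp add: if_distrib sum.delta' cong: if_cong)

lemma row_stochastic_mpow:
  assumes "row_stochastic n T"
  shows "row_stochastic n (mpow n T t)"
  unfolding row_stochastic_def
proof (induction t)
  case 0
  show ?case by (simp add: sum.delta)
next
  case (Suc t)
  have T: "\<forall>a<n. \<forall>b<n. 0 \<le> T a b" using assms by (simp add: row_stochastic_def)
  have "(\<Sum>j<n. mpow n T (Suc t) i j) = 1" if "i < n" for i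
  proof -
    have "(\<Sum>j<n. mpow n T (Suc t) i j) = (\<Sum>l<n. T i l * (\<Sum>j<n. mpow n T t l j))"
      by (simp add: sum_distrib_left) (rule sum.swap)
    also have "\<dots> = (\<Sum>l<n. T i l)" using Suc by simp
    finally show ?thesis using assms that by (simp add: row_stochastic_def)
  qed
  then show ?case using mpow_nonneg[OF T] by blast
qed

lemma mpow_add:
  assumes "i < n"
  shows "mpow n A (a + b) i j = (\<Sum>l<n. mpow n A a i l * mpow n A b l j)"
  using assms
proof (induction a arbitrary: i)
  case 0
  have "(\<Sum>l<n. mpow n A 0 i l * mpow n A b l j) = (\<Sum>l<n. if i = l then mpow n A b l j else 0)"
    by (rule sum.cong) auto
  then show ?case using 0 by simp
next
  case (Suc a)
  have "mpow n A (Suc a + b) i j = (\<Sum>l<n. A i l * (\<Sum>l'<n. mpow n A a l l' * mpow n A b l' j))"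
    by (simp add: Suc.IH)
  also have "\<dots> = (\<Sum>l'<n. (\<Sum>l<n. A i l * mpow n A a l l') * mpow n A b l' j)"
    by (simp add: sum_distrib_left sum_distrib_right mult.assoc) (rule sum.swap)
  finally show ?case by simp
qed

lemma mpow_cong:
  assumes "\<forall>a<n. \<forall>b<n. A a b = B a b" and "i < n"
  shows "mpow n A t i j = mpow n B t i j"
  using assms(2) by (induction t arbitrary: i) (simp_all add: assms(1))

lemma mpow_pos_trans:
  assumes "\<forall>a<n. \<forall>b<n. 0 \<le> A a b" and "i < n" and "l < n"
    and "0 < mpow n A s i l" and "0 < mpow n A t l j"
  shows "0 < mpow n A (s + t) i j"
proof -
  have "0 < mpow n A s i l * mpow n A t l j" using assms(4,5) by simp
  also have "\<dots> \<le> (\<Sum>l'<n. mpow n A s i l' * mpow n A t l' j)"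
    using assms(1-3) mpow_nonneg[OF assms(1)] by (intro member_le_sum) auto
  finally show ?thesis using mpow_add[OF assms(2)] by simp
qed

lemma strongly_connected_if_path:
  assumes nonneg: "\<forall>a<n. \<forall>b<n. 0 \<le> A a b"
    and path: "\<And>i. Suc i < n \<Longrightarrow> 0 < A i (Suc i) \<and> 0 < A (Suc i) i"
  shows "strongly_connected n A"
proof -
  define reach where "reach i j \<longleftrightarrow> (\<exists>t. 0 < mpow n A t i j)" for i j
  have trans: "reach i j" if "reach i l" "reach l j" "i < n" "l < n" for i l j
    using that mpow_pos_trans[OF nonneg] unfolding reach_def by blast
  have step: "reach i (Suc i) \<and> reach (Suc i) i" if "Suc i < n" for i
    using path[OF that] that unfolding reach_def by (metis Suc_lessD mpow_1)
  have along: "reach i (i + k) \<and> reach (i + k) i" if "i + k < n" for i k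
    using that
  proof (induction k)
    case 0
    have "0 < mpow n A 0 i i" by simp
    then show ?case unfolding reach_def by (auto intro: exI[of _ 0])
  next
    case (Suc k)
    then have "reach i (i + k)" "reach (i + k) i" "reach (i + k) (i + Suc k)" "reach (i + Suc k) (i + k)"
      using step[of "i + k"] by auto
    moreover have "i < n" "i + k < n" using Suc.prems by auto
    ultimately show ?case using trans Suc.prems by blast
  qed
  have "reach i j" if "i < n" "j < n" for i j
  proof (cases "i \<le> j")
    case True
    then show ?thesis using along[of i "j - i"] that by simp
  next
    case False
    then show ?thesis using along[of j "i - j"] that by simp
  qed
  then show ?thesis unfolding strongly_connected_def reach_def by blast
qed

section \<open>Certain returns in aperiodic chains\<close>

lemma row_stochastic_diag_eq_1_iff:
  assumes "row_stochastic n M" and "i < n"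
  shows "M i i = 1 \<longleftrightarrow> (\<forall>j<n. j \<noteq> i \<longrightarrow> M i j = 0)"
proof -
  have "1 = M i i + (\<Sum>j\<in>{..<n} - {i}. M i j)"
    using assms by (simp add: row_stochastic_def sum.remove)
  moreover have "(\<Sum>j\<in>{..<n} - {i}. M i j) = 0 \<longleftrightarrow> (\<forall>j<n. j \<noteq> i \<longrightarrow> M i j = 0)"
    using assms by (subst sum_nonneg_eq_0_iff) (auto simp: row_stochastic_def)
  ultimately show ?thesis by auto
qed

lemma mpow_shift_if_diag_eq_1:
  assumes "row_stochastic n T" and "i < n" and "mpow n T a i i = 1"
  shows "mpow n T (a + b) i j = mpow n T b i j"
proof -
  have "mpow n T a i l * mpow n T b l j = (if i = l then mpow n T b l j else 0)" if "l < n" for l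
    using row_stochastic_diag_eq_1_iff[OF row_stochastic_mpow[OF assms(1)] assms(2)] assms(3) that
    by auto
  then have "(\<Sum>l<n. mpow n T a i l * mpow n T b l j) = (\<Sum>l<n. if i = l then mpow n T b l j else 0)"
    by (intro sum.cong) auto
  then show ?thesis using assms(2) by (simp add: mpow_add)
qed

lemma Gcd_mem_if_closed_diff:
  fixes Q :: "nat set"
  assumes diff: "\<And>a b. a \<in> Q \<Longrightarrow> b \<in> Q \<Longrightarrow> a \<le> b \<Longrightarrow> b - a \<in> Q"
    and "d \<in> Q" and "0 < d"
  shows "Gcd Q \<in> Q"
proof -
  define d0 where "d0 = (LEAST d. d \<in> Q \<and> 0 < d)"
  have d0: "d0 \<in> Q" "0 < d0"
    using LeastI[of "\<lambda>d. d \<in> Q \<and> 0 < d", OF conjI[OF assms(2,3)]] by (auto simp: d0_def)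
  have mod_mem: "q mod d0 \<in> Q" if "q \<in> Q" for q
    using that
  proof (induction q rule: less_induct)
    case (less q)
    show ?case
    proof (cases "d0 \<le> q")
      case True
      then show ?thesis using less d0 diff[of d0 q] by (simp add: le_mod_geq)
    qed (use less in simp)
  qed
  have "d0 dvd q" if "q \<in> Q" for q
  proof -
    have "\<not> (q mod d0 \<in> Q \<and> 0 < q mod d0)"
      using not_less_Least[of "q mod d0" "\<lambda>d. d \<in> Q \<and> 0 < d"] d0(2) by (auto simp: d0_def)
    then show ?thesis using mod_mem[OF that] by (simp add: dvd_eq_mod_eq_0)
  qed
  then have "d0 dvd Gcd Q" by (rule Gcd_greatest)
  moreover have "Gcd Q dvd d0" using d0(1) by (rule Gcd_dvd)
  ultimately show ?thesis using d0(1) dvd_antisym by metis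
qed

context
  fixes n T i
  assumes stoch: "row_stochastic n T" and i: "i < n"
begin

lemma mpow_diag_eq_1_diff:
  assumes "mpow n T a i i = 1" and "mpow n T b i i = 1" and "a \<le> b"
  shows "mpow n T (b - a) i i = 1"
  using mpow_shift_if_diag_eq_1[OF stoch i assms(1), of "b - a" i] assms by simp

lemma mpow_diag_eq_1_mult:
  assumes "mpow n T a i i = 1"
  shows "mpow n T (k * a) i i = 1"
  by (induction k) (simp_all add: mpow_shift_if_diag_eq_1[OF stoch i assms])

lemma mpow_diag_eq_1_if_return:
  assumes certain: "mpow n T t i i = 1" and "0 < t" and return: "0 < mpow n T s i i"
  shows "mpow n T s i i = 1"
proof -
  let ?M = "mpow n T"
  define r where "r = s * t - s"
  have st: "?M (s + r) i i = 1" "s \<le> s * t"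
    using mpow_diag_eq_1_mult[OF certain, of s] \<open>0 < t\<close> by (simp_all add: r_def)
  have "?M r i j = 0" if "j < n" "j \<noteq> i" for j
  proof -
    have "?M s i i * ?M r i j \<le> (\<Sum>l<n. ?M s i l * ?M r l j)"
      using i mpow_nonneg stoch by (intro member_le_sum) (auto simp: row_stochastic_def intro!: mult_nonneg_nonneg)
    also have "\<dots> = 0"
      using mpow_add[OF i, of T s r j] st(1) row_stochastic_diag_eq_1_iff[OF row_stochastic_mpow[OF stoch] i] that
      by simp
    finally show ?thesis
      using return mpow_nonneg[of n T i r j] stoch i
      by (simp add: row_stochastic_def mult_le_0_iff)
  qed
  then have "?M r i i = 1"
    using row_stochastic_diag_eq_1_iff[OF row_stochastic_mpow[OF stoch] i] by simp
  then show ?thesis using mpow_diag_eq_1_diff[of r "s * t"] st by (simp add: r_def)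
qed

end

text \<open>A return to i that is certain after t > 0 steps would, by aperiodicity, be certain
  after a single step: the times of certain return are closed under differences and contain
  every possible return time, so their Gcd, which is 1, is one of them.
  Then i is absorbing, contradicting strong connectivity.\<close>
lemma mpow_diag_less_1:
  assumes stoch: "row_stochastic n T" and "strongly_connected n T" and "aperiodic n T"
    and i: "i < n" and "j < n" and "j \<noteq> i" and "0 < t"
  shows "mpow n T t i i < 1"
proof (rule ccontr)
  assume "\<not> mpow n T t i i < 1"
  moreover have "mpow n T t i i \<le> 1"
    using row_stochastic_mpow[OF stoch, of t] i member_le_sum[of i "{..<n}" "mpow n T t i"]
    by (auto simp: row_stochastic_def)
  ultimately have certain: "mpow n T t i i = 1" by simp
  define Q where "Q = {s. mpow n T s i i = 1}"
  have "Gcd Q dvd s" if "0 < s" "0 < mpow n T s i i" for s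
    using mpow_diag_eq_1_if_return[OF stoch i certain \<open>0 < t\<close> that(2)] by (simp add: Q_def)
  then have "Gcd Q dvd Gcd {s. 0 < s \<and> 0 < mpow n T s i i}" by (auto intro: Gcd_greatest)
  then have "Gcd Q = 1" using \<open>aperiodic n T\<close> i by (simp add: aperiodic_def)
  moreover have "Gcd Q \<in> Q"
    using Gcd_mem_if_closed_diff[of Q t] mpow_diag_eq_1_diff[OF stoch i] certain \<open>0 < t\<close>
    by (simp add: Q_def)
  ultimately have "mpow n T 1 i i = 1" by (simp add: Q_def)
  then have "mpow n T s i j = 0" for s
    using mpow_shift_if_diag_eq_1[OF stoch i, of 1] \<open>j \<noteq> i\<close> by (induction s) auto
  then show False
    using \<open>strongly_connected n T\<close> i \<open>j < n\<close> unfolding strongly_connected_def by (metis less_irrefl)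
qed

section \<open>No shock election without confirmation bias\<close>

lemma less_5_cases:
  fixes k :: nat
  assumes "k < 5"
  shows "k = 0 \<or> k = 1 \<or> k = 2 \<or> k = 3 \<or> k = 4"
  using assms by auto

lemma params_ok_level_bounds:
  assumes "params_ok xk f" and "k < 5"
  shows "0 \<le> xk k \<and> xk k \<le> 1"
  using less_5_cases[OF assms(2)] assms(1) unfolding params_ok_def by auto

lemma params_ok_inj_levels:
  assumes "params_ok xk f"
  shows "inj_on xk {..<5}"
proof (rule inj_onI)
  fix k l assume "k \<in> {..<5}" "l \<in> {..<5}" "xk k = xk l"
  then show "k = l"
    using less_5_cases[of k] less_5_cases[of l] assms unfolding params_ok_def by auto
qed

lemma society_belief_bounds:
  assumes "params_ok xk f" and "society xk f n x0" and "i < n"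
  shows "0 \<le> x0 i \<and> x0 i \<le> 1"
proof -
  obtain k where "k < 5" "x0 i = xk k" using assms(2,3) unfolding society_def by blast
  then show ?thesis using params_ok_level_bounds[OF assms(1)] by simp
qed

lemma society_level_occurs:
  assumes "params_ok xk f" and "society xk f n x0" and "0 < n" and "k < 5"
  shows "\<exists>i<n. x0 i = xk k"
proof -
  have "0 < real (card {i. i < n \<and> x0 i = xk k})"
    using assms by (simp add: society_def params_ok_def)
  then have "{i. i < n \<and> x0 i = xk k} \<noteq> {}" by (metis card.empty of_nat_0 less_irrefl)
  then show ?thesis by blast
qed

lemma sum_by_level:
  assumes "params_ok xk f" and "society xk f n x0" and "S \<subseteq> {..<n}"
  shows "(\<Sum>j\<in>S. g j * x0 j) = (\<Sum>k<5. xk k * (\<Sum>j\<in>{j\<in>S. x0 j = xk k}. g j))"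
proof -
  have "finite S" using assms(3) finite_subset by blast
  moreover have "x0 ` S \<subseteq> xk ` {..<5}" using assms(2,3) unfolding society_def by blast
  ultimately have "(\<Sum>j\<in>S. g j * x0 j) = (\<Sum>v\<in>xk ` {..<5}. \<Sum>j\<in>{j\<in>S. x0 j = v}. g j * x0 j)"
    by (intro sum.group[symmetric]) auto
  also have "\<dots> = (\<Sum>k<5. \<Sum>j\<in>{j\<in>S. x0 j = xk k}. g j * xk k)"
    using params_ok_inj_levels[OF assms(1)] by (simp add: sum.reindex)
  finally show ?thesis by (simp add: sum_distrib_left mult.commute)
qed

lemma tstar_zero:
  assumes "\<forall>i<n. 0 \<le> x0 i \<and> x0 i \<le> 1" and "a < n" and "b < n"
  shows "tstar n 0 x0 T a b = T a b"
proof -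
  have near: "\<not> 1 < \<bar>x0 a - x0 l\<bar>" if "l < n" for l
  proof -
    have "0 \<le> x0 a" "x0 a \<le> 1" "0 \<le> x0 l" "x0 l \<le> 1" using assms(1,2) that by auto
    then show ?thesis by (simp add: abs_le_iff not_less)
  qed
  then have empty: "{l. l < n \<and> l \<noteq> a \<and> 1 < \<bar>x0 a - x0 l\<bar>} = {}" by blast
  show ?thesis
  proof (cases "a = b")
    case True
    then show ?thesis by (simp add: tstar_def empty flip: True)
  qed (use near[OF \<open>b < n\<close>] in \<open>simp add: tstar_def\<close>)
qed

lemma belief_le_mean_field:
  assumes "params_ok xk f" and "society xk f n x0" and "mean_field eps n T x0 xk f"
    and stoch: "row_stochastic n T" and i: "i < n" and "0 \<le> eps"
  shows "belief n T x0 t i \<le> mpow n T t i i * x0 i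
           + (1 - mpow n T t i i) * ((\<Sum>k<5. xk k * f k) + 5 * eps)"
proof -
  let ?M = "mpow n T t"
  define S where "S = {j. j < n \<and> j \<noteq> i}"
  have S_sub: "S \<subseteq> {..<n}" by (auto simp: S_def)
  have "?M i i \<le> 1"
    using row_stochastic_mpow[OF stoch, of t] i member_le_sum[of i "{..<n}" "?M i"]
    by (auto simp: row_stochastic_def)
  have belief_split: "belief n T x0 t i = ?M i i * x0 i + (\<Sum>j\<in>S. ?M i j * x0 j)"
  proof -
    have "{..<n} = insert i S" using i by (auto simp: S_def)
    then show ?thesis unfolding belief_def by (simp add: S_def)
  qed
  have "(\<Sum>j\<in>S. ?M i j * x0 j) = (\<Sum>k<5. xk k * (\<Sum>j\<in>{j\<in>S. x0 j = xk k}. ?M i j))"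
    using sum_by_level[OF assms(1,2) S_sub] .
  also have "\<dots> \<le> (\<Sum>k<5. (1 - ?M i i) * (xk k * f k + eps))"
  proof (rule sum_mono)
    fix k assume k: "k \<in> {..<5::nat}"
    have "{j\<in>S. x0 j = xk k} = {j. j < n \<and> j \<noteq> i \<and> x0 j = xk k}" by (auto simp: S_def)
    then have "\<bar>(\<Sum>j\<in>{j\<in>S. x0 j = xk k}. ?M i j) - (1 - ?M i i) * f k\<bar> \<le> eps * (1 - ?M i i)"
      using assms(3) i k unfolding mean_field_def by simp
    then have W: "(\<Sum>j\<in>{j\<in>S. x0 j = xk k}. ?M i j) \<le> (1 - ?M i i) * (f k + eps)"
      by (simp add: abs_le_iff algebra_simps)
    have xk: "0 \<le> xk k" "xk k \<le> 1" using params_ok_level_bounds[OF assms(1)] k by auto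
    have "xk k * (\<Sum>j\<in>{j\<in>S. x0 j = xk k}. ?M i j) \<le> xk k * ((1 - ?M i i) * (f k + eps))"
      using W xk(1) by (rule mult_left_mono)
    also have "\<dots> = (1 - ?M i i) * (xk k * f k + xk k * eps)" by (simp add: algebra_simps)
    also have "\<dots> \<le> (1 - ?M i i) * (xk k * f k + eps)"
    proof (rule mult_left_mono)
      show "xk k * f k + xk k * eps \<le> xk k * f k + eps"
        using xk \<open>0 \<le> eps\<close> mult_left_le_one_le[of eps "xk k"] by linarith
    qed (use \<open>?M i i \<le> 1\<close> in simp)
    finally show "xk k * (\<Sum>j\<in>{j\<in>S. x0 j = xk k}. ?M i j) \<le> (1 - ?M i i) * (xk k * f k + eps)" .
  qed
  also have "\<dots> = (1 - ?M i i) * ((\<Sum>k<5. xk k * f k) + 5 * eps)"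
    by (simp add: sum.distrib sum_distrib_left distrib_left)
  finally show ?thesis unfolding belief_split by (rule add_left_mono)
qed

lemma belief_less_half:
  assumes stoch: "row_stochastic n T" and "strongly_connected n T" and "aperiodic n T"
    and "params_ok xk f" and "society xk f n x0" and "mean_field eps n T x0 xk f"
    and "0 \<le> eps" and small: "(\<Sum>k<5. xk k * f k) + 5 * eps < 1/2"
    and i: "i < n" and "j < n" and "j \<noteq> i" and "x0 i \<le> 1/2" and "0 < t"
  shows "belief n T x0 t i < 1/2"
proof -
  define m where "m = mpow n T t i i"
  have "m < 1" unfolding m_def using mpow_diag_less_1 assms by blast
  have "0 \<le> m" unfolding m_def using mpow_nonneg stoch i by (simp add: row_stochastic_def)
  have "belief n T x0 t i \<le> m * x0 i + (1 - m) * ((\<Sum>k<5. xk k * f k) + 5 * eps)"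
    unfolding m_def using belief_le_mean_field assms by blast
  also have "\<dots> < m * (1/2) + (1 - m) * (1/2)"
    using \<open>m < 1\<close> \<open>0 \<le> m\<close> \<open>x0 i \<le> 1/2\<close> small
    by (intro add_le_less_mono mult_left_mono mult_strict_left_mono) auto
  also have "\<dots> = 1/2" by (simp add: field_simps)
  finally show ?thesis .
qed

lemma card_votes_at_least_half:
  "right_votes n x + indiff_votes n x = card {i. i < n \<and> 1/2 \<le> x i}"
proof -
  have eq: "{i. i < n \<and> 1/2 \<le> x i} = {i. i < n \<and> x i > 1/2} \<union> {i. i < n \<and> x i = 1/2}" by auto
  show ?thesis unfolding right_votes_def indiff_votes_def eq by (rule card_Un_disjoint[symmetric]) auto
qed

lemma card_votes_at_most_half:
  "left_votes n x + indiff_votes n x = card {i. i < n \<and> x i \<le> 1/2}"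
proof -
  have eq: "{i. i < n \<and> x i \<le> 1/2} = {i. i < n \<and> x i < 1/2} \<union> {i. i < n \<and> x i = 1/2}" by auto
  show ?thesis unfolding left_votes_def indiff_votes_def eq by (rule card_Un_disjoint[symmetric]) auto
qed

lemma prob_right_wins_eq_0:
  assumes "card {i. i < n \<and> 1/2 \<le> x i} < card {i. i < n \<and> x i < 1/2}"
  shows "prob_right_wins n x = 0"
proof -
  have "right_votes n x + indiff_votes n x < left_votes n x"
    using assms card_votes_at_least_half by (simp add: left_votes_def)
  then show ?thesis unfolding prob_right_wins_def right_win_prob_def by (intro sum.neutral) auto
qed

lemma prob_right_wins_eq_1:
  assumes "card {i. i < n \<and> x i \<le> 1/2} < card {i. i < n \<and> 1/2 < x i}"
  shows "prob_right_wins n x = 1"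
proof -
  let ?L = "left_votes n x" and ?R = "right_votes n x" and ?U = "indiff_votes n x"
  have "?L + ?U < ?R"
    using assms card_votes_at_most_half by (simp add: right_votes_def)
  then have "prob_right_wins n x = (\<Sum>k\<le>?U. real (?U choose k) / 2 ^ ?U)"
    unfolding prob_right_wins_def right_win_prob_def by (intro sum.cong) auto
  also have "\<dots> = 1"
    using choose_row_sum[of ?U] by (simp flip: sum_divide_distrib of_nat_sum)
  finally show ?thesis .
qed

lemma prob_right_wins_eq_0_if_lower_half_votes_left:
  assumes par: "params_ok xk f" and soc: "society xk f n x0" and "0 < n"
    and leans: "\<And>i. i < n \<Longrightarrow> x0 i \<le> 1/2 \<Longrightarrow> x i < 1/2"
  shows "prob_right_wins n x = 0"
proof -
  define V where "V k = {i. i < n \<and> x0 i = xk k}" for k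
  have card_V: "real (card (V k)) = f k * real n" if "k < 5" for k
    using soc that unfolding society_def V_def by blast
  have levels: "xk 0 \<le> 1/2" "xk 1 \<le> 1/2" "xk 0 \<noteq> xk 1" "xk 2 \<le> 1/2"
    using par unfolding params_ok_def by auto
  have "V 0 \<union> V 1 \<subseteq> {i. i < n \<and> x i < 1/2}"
    using leans levels unfolding V_def by auto
  then have left: "card (V 0) + card (V 1) \<le> card {i. i < n \<and> x i < 1/2}"
    using levels by (subst card_Un_disjoint[symmetric]) (auto simp: V_def intro: card_mono)
  have "{i. i < n \<and> 1/2 \<le> x i} \<subseteq> V 3 \<union> V 4"
  proof
    fix i assume i: "i \<in> {i. i < n \<and> 1/2 \<le> x i}"
    obtain k where "k < 5" "x0 i = xk k" using soc i unfolding society_def by auto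
    moreover have "\<not> x0 i \<le> 1/2" using leans[of i] i by auto
    ultimately show "i \<in> V 3 \<union> V 4"
      using less_5_cases[of k] levels i unfolding V_def by auto
  qed
  then have "card {i. i < n \<and> 1/2 \<le> x i} \<le> card (V 3 \<union> V 4)"
    by (intro card_mono) (simp_all add: V_def)
  also have "\<dots> \<le> card (V 3) + card (V 4)" by (rule card_Un_le)
  finally have right: "card {i. i < n \<and> 1/2 \<le> x i} \<le> card (V 3) + card (V 4)" .
  have "f 3 + f 4 < f 0 + f 1" using par unfolding params_ok_def by simp
  then have "real (card (V 3) + card (V 4)) < real (card (V 0) + card (V 1))"
    using card_V[of 0] card_V[of 1] card_V[of 3] card_V[of 4] \<open>0 < n\<close>
    by (simp add: distrib_right[symmetric])
  then show ?thesis using left right by (intro prob_right_wins_eq_0) linarith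
qed

lemma wise_imp_pos: "wise C n T \<Longrightarrow> 0 < n"
  by (rule ccontr) (simp add: wise_def influence_def)

lemma no_shock_without_bias:
  assumes par: "params_ok xk f"
  shows "\<exists>eps > 0. \<forall>n T x0.
           row_stochastic n T \<and> strongly_connected n T \<and> aperiodic n T \<and>
           society xk f n x0 \<and> mean_field eps n T x0 xk f \<and> wise C n T \<and>
           strongly_connected n (tstar n 0 x0 T)
           \<longrightarrow> (\<forall>t > 0. prob_right_wins n (belief n (tstar n 0 x0 T) x0 t) = 0)"
proof -
  define mu where "mu = (\<Sum>k<5. xk k * f k)"
  define eps where "eps = (1/2 - mu) / 10"
  have "mu < 1/2" using par unfolding params_ok_def mu_def by simp
  then have "0 < eps" and small: "mu + 5 * eps < 1/2" unfolding eps_def by (simp_all add: field_simps)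
  moreover have "prob_right_wins n (belief n (tstar n 0 x0 T) x0 t) = 0"
    if stoch: "row_stochastic n T" and conn: "strongly_connected n T" and aper: "aperiodic n T"
      and soc: "society xk f n x0" and mf: "mean_field eps n T x0 xk f" and "wise C n T" and "0 < t"
    for n T x0 t
  proof -
    have "0 < n" using \<open>wise C n T\<close> by (rule wise_imp_pos)
    obtain a b where "a < n" "x0 a = xk 0" "b < n" "x0 b = xk 1"
      using society_level_occurs[OF par soc \<open>0 < n\<close>, of 0] society_level_occurs[OF par soc \<open>0 < n\<close>, of 1]
      by auto
    moreover have "xk 0 \<noteq> xk 1" using par unfolding params_ok_def by simp
    ultimately have other: "\<exists>j<n. j \<noteq> i" for i by metis
    have agree: "\<forall>a<n. \<forall>b<n. tstar n 0 x0 T a b = T a b"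
      using tstar_zero society_belief_bounds[OF par soc] by blast
    have same: "belief n (tstar n 0 x0 T) x0 t i = belief n T x0 t i" if "i < n" for i
      unfolding belief_def by (simp add: mpow_cong[OF agree that])
    have "belief n T x0 t i < 1/2" if "i < n" "x0 i \<le> 1/2" for i
    proof -
      obtain j where "j < n" "j \<noteq> i" using other by blast
      with that show ?thesis
        using belief_less_half[OF stoch conn aper par soc mf _ small[unfolded mu_def]] \<open>0 < eps\<close> \<open>0 < t\<close> by simp
    qed
    then show ?thesis
      using same by (intro prob_right_wins_eq_0_if_lower_half_votes_left[OF par soc \<open>0 < n\<close>]) simp
  qed
  ultimately show ?thesis by blast
qed

section \<open>The uniform network\<close>

definition uniform_network :: "nat \<Rightarrow> nat \<Rightarrow> nat \<Rightarrow> real" where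
  "uniform_network n i j = 1 / real n"

lemma mpow_uniform_network:
  assumes "j < n"
  shows "mpow n (uniform_network n) (Suc t) i j = 1 / real n"
proof (induction t arbitrary: i)
  case 0
  have "(\<Sum>l<n. uniform_network n i l * mpow n (uniform_network n) 0 l j)
      = (\<Sum>l<n. if l = j then 1 / real n else 0)"
    by (rule sum.cong) (auto simp: uniform_network_def)
  then show ?case using assms by simp
next
  case (Suc t)
  then show ?case using assms by (simp add: uniform_network_def)
qed

lemma row_stochastic_uniform_network: "0 < n \<Longrightarrow> row_stochastic n (uniform_network n)"
  by (simp add: row_stochastic_def uniform_network_def)

lemma strongly_connected_uniform_network: "0 < n \<Longrightarrow> strongly_connected n (uniform_network n)"
  unfolding strongly_connected_def using mpow_uniform_network by (metis of_nat_0_less_iff zero_less_divide_1_iff)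

lemma aperiodic_uniform_network:
  assumes "0 < n"
  shows "aperiodic n (uniform_network n)"
  unfolding aperiodic_def
proof (intro allI impI)
  fix i assume "i < n"
  then have "1 \<in> {t. 0 < t \<and> 0 < mpow n (uniform_network n) t i i}"
    using mpow_uniform_network[of i n 0 i] by simp
  then show "Gcd {t. 0 < t \<and> 0 < mpow n (uniform_network n) t i i} = 1"
    using Gcd_dvd by (metis nat_dvd_1_iff_1)
qed

lemma wise_uniform_network: "0 < n \<Longrightarrow> wise 1 n (uniform_network n)"
  unfolding wise_def influence_def
  by (rule exI[of _ "\<lambda>_. 1 / real n"]) (simp add: uniform_network_def)

lemma mean_field_uniform_network:
  assumes par: "params_ok xk f" and soc: "society xk f n x0" and large: "1 \<le> eps * (real n - 1)"
  shows "mean_field eps n (uniform_network n) x0 xk f"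
  unfolding mean_field_def
proof (intro allI impI)
  fix t i k assume i: "i < n" and k: "k < (5::nat)"
  let ?M = "mpow n (uniform_network n) t"
  define S where "S = {j. j < n \<and> j \<noteq> i \<and> x0 j = xk k}"
  show "\<bar>sum (?M i) S - (1 - ?M i i) * f k\<bar> \<le> eps * (1 - ?M i i)"
  proof (cases t)
    case 0
    then show ?thesis by (simp add: S_def)
  next
    case (Suc t')
    define d :: real where "d = (if x0 i = xk k then 1 else 0)"
    have "{j. j < n \<and> x0 j = xk k} = (if x0 i = xk k then insert i S else S)"
      using i by (auto simp: S_def)
    then have "real (card S) = f k * real n - d"
      using soc k by (auto simp: society_def d_def S_def)
    moreover have sum_S: "sum (?M i) S = real (card S) / real n" and diag: "?M i i = 1 / real n"
      using Suc i mpow_uniform_network by (simp_all add: S_def)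
    ultimately have diff: "sum (?M i) S - (1 - ?M i i) * f k = (f k - d) / real n"
      using i unfolding sum_S diag by (simp add: field_simps)
    have "\<bar>f k - d\<bar> \<le> 1" using par k by (auto simp: params_ok_def d_def)
    then have "\<bar>(f k - d) / real n\<bar> \<le> 1 / real n" using i by (simp add: divide_right_mono)
    also have "\<dots> \<le> eps * (real n - 1) / real n" using large by (simp add: divide_right_mono)
    also have "\<dots> = eps * (1 - ?M i i)" using i diag by (simp add: field_simps)
    finally show ?thesis unfolding diff .
  qed
qed

lemma tstar_nonneg:
  assumes "\<forall>a<n. \<forall>b<n. 0 \<le> T a b" and "a < n" and "b < n"
  shows "0 \<le> tstar n q x0 T a b"
  using assms by (auto simp: tstar_def intro!: add_nonneg_nonneg sum_nonneg)

lemma belief_tstar_1: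
  assumes i: "i < n"
  shows "belief n (tstar n q x0 T) x0 1 i
       = (\<Sum>j<n. T i j * (if 1 - q < \<bar>x0 i - x0 j\<bar> then x0 i else x0 j))"
proof -
  let ?far = "\<lambda>j. 1 - q < \<bar>x0 i - x0 j\<bar>"
  define S where "S = {..<n} - {i}"
  define F where "F = {j \<in> S. ?far j}"
  have "belief n (tstar n q x0 T) x0 1 i = (\<Sum>j<n. tstar n q x0 T i j * x0 j)"
    unfolding belief_def by (intro sum.cong refl) (metis lessThan_iff mpow_1)
  also have "\<dots> = tstar n q x0 T i i * x0 i + (\<Sum>j\<in>S. tstar n q x0 T i j * x0 j)"
    using i by (simp add: S_def sum.remove)
  also have "tstar n q x0 T i i = T i i + (\<Sum>j\<in>F. T i j)"
  proof -
    have "F = {l. l < n \<and> l \<noteq> i \<and> ?far l}" by (auto simp: F_def S_def)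
    then show ?thesis by (simp add: tstar_def)
  qed
  also have "(\<Sum>j\<in>S. tstar n q x0 T i j * x0 j) = (\<Sum>j\<in>S. if ?far j then 0 else T i j * x0 j)"
    by (rule sum.cong) (auto simp: S_def tstar_def)
  also have "(T i i + (\<Sum>j\<in>F. T i j)) * x0 i + (\<Sum>j\<in>S. if ?far j then 0 else T i j * x0 j)
      = T i i * x0 i + (\<Sum>j\<in>S. T i j * (if ?far j then x0 i else x0 j))"
  proof -
    have "(\<Sum>j\<in>F. T i j) * x0 i = (\<Sum>j\<in>S. if ?far j then T i j * x0 i else 0)"
      unfolding F_def sum_distrib_right by (subst sum.inter_filter) (simp_all add: S_def)
    moreover have "(\<Sum>j\<in>S. T i j * (if ?far j then x0 i else x0 j))
        = (\<Sum>j\<in>S. if ?far j then T i j * x0 i else 0) + (\<Sum>j\<in>S. if ?far j then 0 else T i j * x0 j)"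
      by (simp add: sum.distrib[symmetric] if_distrib cong: if_cong)
    ultimately show ?thesis by (simp add: algebra_simps)
  qed
  also have "\<dots> = (\<Sum>j<n. T i j * (if ?far j then x0 i else x0 j))"
    using i by (simp add: S_def sum.remove)
  finally show ?thesis .
qed

section \<open>A shock election under confirmation bias\<close>

definition shock_level :: "nat \<Rightarrow> real" where
  "shock_level k = (if k = 0 then 0 else if k = 1 then 3/10 else if k = 2 then 1/2
                    else if k = 3 then 3/4 else 1)"

definition shock_fraction :: "nat \<Rightarrow> real" where
  "shock_fraction k = (if k = 0 then 1/4 else if k = 1 then 1/10 else if k = 2 then 7/20 else 3/20)"

text \<open>Types increase with the index, so consecutive voters never ignore each other under T*.\<close>
definition shock_type :: "nat \<Rightarrow> nat \<Rightarrow> nat" where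
  "shock_type m i = (if i < 5*m then 0 else if i < 7*m then 1 else if i < 14*m then 2
                     else if i < 17*m then 3 else 4)"

definition shock_society :: "nat \<Rightarrow> nat \<Rightarrow> real" where
  "shock_society m i = shock_level (shock_type m i)"

lemma params_ok_shock: "params_ok shock_level shock_fraction"
  by (simp add: params_ok_def shock_level_def shock_fraction_def eval_nat_numeral)

lemma shock_type_less_5: "shock_type m i < 5"
  by (simp add: shock_type_def)

lemma shock_type_Suc: "shock_type m i \<le> shock_type m (Suc i) \<and> shock_type m (Suc i) \<le> shock_type m i + 1"
  by (simp add: shock_type_def)

lemma card_shock_type:
  assumes "k < 5"
  shows "real (card {i. i < 20*m \<and> shock_type m i = k}) = shock_fraction k * real (20*m)"
proof -
  have "{i. i < 20*m \<and> shock_type m i = 0} = {..<5*m}"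
    "{i. i < 20*m \<and> shock_type m i = 1} = {5*m..<7*m}"
    "{i. i < 20*m \<and> shock_type m i = 2} = {7*m..<14*m}"
    "{i. i < 20*m \<and> shock_type m i = 3} = {14*m..<17*m}"
    "{i. i < 20*m \<and> shock_type m i = 4} = {17*m..<20*m}"
    by (auto simp: shock_type_def)
  then show ?thesis using less_5_cases[OF assms] by (auto simp: shock_fraction_def)
qed

lemma shock_society_eq_level_iff: "k < 5 \<Longrightarrow> shock_society m i = shock_level k \<longleftrightarrow> shock_type m i = k"
  using inj_onD[OF params_ok_inj_levels[OF params_ok_shock]] shock_type_less_5
  unfolding shock_society_def by blast

lemma society_shock: "society shock_level shock_fraction (20*m) (shock_society m)"
  unfolding society_def
proof (intro conjI)
  show "\<forall>i<20*m. \<exists>k<5. shock_society m i = shock_level k"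
    using shock_type_less_5 unfolding shock_society_def by blast
  show "\<forall>k<5. real (card {i. i < 20*m \<and> shock_society m i = shock_level k}) = shock_fraction k * real (20*m)"
    using shock_society_eq_level_iff card_shock_type by simp
qed

lemma shock_level_adjacent:
  assumes "a < 5" and "a \<le> b" and "b \<le> a + 1"
  shows "\<bar>shock_level a - shock_level b\<bar> \<le> 7/20"
  using less_5_cases[OF assms(1)] assms(2,3) by (auto simp: shock_level_def)

lemma strongly_connected_shock:
  assumes "0 < m"
  shows "strongly_connected (20*m) (tstar (20*m) (13/20) (shock_society m) (uniform_network (20*m)))"
proof (rule strongly_connected_if_path)
  show "\<forall>a<20*m. \<forall>b<20*m. 0 \<le> tstar (20*m) (13/20) (shock_society m) (uniform_network (20*m)) a b"
    by (intro allI impI tstar_nonneg) (simp_all add: uniform_network_def)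
next
  fix i
  have "\<bar>shock_society m i - shock_society m (Suc i)\<bar> \<le> 7/20"
    unfolding shock_society_def using shock_level_adjacent shock_type_less_5 shock_type_Suc by blast
  then show "0 < tstar (20*m) (13/20) (shock_society m) (uniform_network (20*m)) i (Suc i)
           \<and> 0 < tstar (20*m) (13/20) (shock_society m) (uniform_network (20*m)) (Suc i) i"
    using assms by (simp add: tstar_def uniform_network_def abs_minus_commute)
qed

lemma belief_shock_1:
  assumes "0 < m" and i: "i < 20*m"
  shows "belief (20*m) (tstar (20*m) (13/20) (shock_society m) (uniform_network (20*m))) (shock_society m) 1 i
       = (\<Sum>k<5. shock_fraction k *
            (if 7/20 < \<bar>shock_level (shock_type m i) - shock_level k\<bar>
             then shock_level (shock_type m i) else shock_level k))"
  (is "_ = (\<Sum>k<5. shock_fraction k * ?z k)")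
proof -
  let ?n = "20*m"
  have "belief ?n (tstar ?n (13/20) (shock_society m) (uniform_network ?n)) (shock_society m) 1 i
      = (\<Sum>j<?n. ?z (shock_type m j) / real ?n)"
    using belief_tstar_1[OF i] by (simp add: uniform_network_def shock_society_def cong: if_cong)
  also have "\<dots> = (\<Sum>k<5. \<Sum>j\<in>{j \<in> {..<?n}. shock_type m j = k}. ?z (shock_type m j) / real ?n)"
    using shock_type_less_5 by (intro sum.group[symmetric]) auto
  also have "\<dots> = (\<Sum>k<5. \<Sum>j\<in>{j \<in> {..<?n}. shock_type m j = k}. ?z k / real ?n)"
    by (intro sum.cong refl) auto
  also have "\<dots> = (\<Sum>k<5. shock_fraction k * ?z k)"
    using card_shock_type \<open>0 < m\<close> by (intro sum.cong refl) simp
  finally show ?thesis .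
qed

lemma shock_right_leaning:
  assumes "2 \<le> k" and "k < 5"
  shows "1/2 < (\<Sum>l<5. shock_fraction l *
            (if 7/20 < \<bar>shock_level k - shock_level l\<bar> then shock_level k else shock_level l))"
  using assms by (auto simp: eval_nat_numeral shock_level_def shock_fraction_def less_Suc_eq)

lemma right_wins_shock:
  assumes "0 < m"
  shows "prob_right_wins (20*m)
           (belief (20*m) (tstar (20*m) (13/20) (shock_society m) (uniform_network (20*m))) (shock_society m) 1) = 1"
proof (rule prob_right_wins_eq_1)
  define B where "B = belief (20*m) (tstar (20*m) (13/20) (shock_society m) (uniform_network (20*m))) (shock_society m) 1"
  define R where "R = {i. i < 20*m \<and> 1/2 < B i}"
  have "{7*m..<20*m} \<subseteq> R"
  proof
    fix i assume "i \<in> {7*m..<20*m}"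
    then have "i < 20*m" "2 \<le> shock_type m i" by (auto simp: shock_type_def)
    then show "i \<in> R"
      using belief_shock_1[OF assms] shock_right_leaning shock_type_less_5 by (simp add: R_def B_def)
  qed
  then have "13*m \<le> card R" using card_mono[of R "{7*m..<20*m}"] by (simp add: R_def)
  moreover have "card {i. i < 20*m \<and> B i \<le> 1/2} = 20*m - card R"
  proof -
    have "{i. i < 20*m \<and> B i \<le> 1/2} = {..<20*m} - R" by (auto simp: R_def)
    then show ?thesis by (simp add: card_Diff_subset R_def subset_iff)
  qed
  ultimately show "card {i. i < 20*m \<and> B i \<le> 1/2} < card R" using assms by linarith
qed

lemma shock_with_bias:
  "\<exists>xk f q C. params_ok xk f \<and> 0 < q \<and> q \<le> 1 \<and> 0 < C \<and>
     (\<forall>eps > 0. \<forall>N. \<exists>n T x0. N \<le> n \<and>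
        row_stochastic n T \<and> strongly_connected n T \<and> aperiodic n T \<and>
        society xk f n x0 \<and> mean_field eps n T x0 xk f \<and> wise C n T \<and>
        strongly_connected n (tstar n q x0 T) \<and>
        (\<exists>t > 0. prob_right_wins n (belief n (tstar n q x0 T) x0 t) = 1))"
proof (rule exI[of _ shock_level], rule exI[of _ shock_fraction], rule exI[of _ "13/20"],
    rule exI[of _ 1], intro conjI allI impI)
  fix eps :: real and N :: nat
  assume "0 < eps"
  define m where "m = N + nat \<lceil>1 / eps\<rceil> + 1"
  have "0 < m" and "N \<le> 20*m" by (simp_all add: m_def)
  have "1 / eps \<le> real (20*m) - 1"
    using real_nat_ceiling_ge[of "1 / eps"] unfolding m_def by simp
  then have "1 \<le> eps * (real (20*m) - 1)" using \<open>0 < eps\<close> by (simp add: field_simps)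
  then show "\<exists>n T x0. N \<le> n \<and>
        row_stochastic n T \<and> strongly_connected n T \<and> aperiodic n T \<and>
        society shock_level shock_fraction n x0 \<and> mean_field eps n T x0 shock_level shock_fraction \<and>
        wise 1 n T \<and> strongly_connected n (tstar n (13/20) x0 T) \<and>
        (\<exists>t > 0. prob_right_wins n (belief n (tstar n (13/20) x0 T) x0 t) = 1)"
    using \<open>0 < m\<close> \<open>N \<le> 20*m\<close>
      row_stochastic_uniform_network strongly_connected_uniform_network aperiodic_uniform_network
      society_shock mean_field_uniform_network[OF params_ok_shock society_shock]
      wise_uniform_network strongly_connected_shock right_wins_shock
    by (intro exI[of _ "20*m"] exI[of _ "uniform_network (20*m)"] exI[of _ "shock_society m"] conjI
        exI[of _ 1]) simp_all
qed (use params_ok_shock in simp_all)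

theorem proposition4:
  shows "(\<exists>xk f q C. params_ok xk f \<and> 0 < q \<and> q \<le> 1 \<and> 0 < C \<and>
           (\<forall>eps > 0. \<forall>N. \<exists>n T x0. N \<le> n \<and>
              row_stochastic n T \<and> strongly_connected n T \<and> aperiodic n T \<and>
              society xk f n x0 \<and> mean_field eps n T x0 xk f \<and> wise C n T \<and>
              strongly_connected n (tstar n q x0 T) \<and>
              (\<exists>t > 0. prob_right_wins n (belief n (tstar n q x0 T) x0 t) = 1)))
       \<and>
       (\<forall>xk f C. params_ok xk f \<longrightarrow> 0 < C \<longrightarrow>
           (\<exists>eps > 0. \<forall>n T x0.
              row_stochastic n T \<and> strongly_connected n T \<and> aperiodic n T \<and>
              society xk f n x0 \<and> mean_field eps n T x0 xk f \<and> wise C n T \<and>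
              strongly_connected n (tstar n 0 x0 T)
              \<longrightarrow> (\<forall>t > 0. prob_right_wins n (belief n (tstar n 0 x0 T) x0 t) = 0)))"
  using shock_with_bias no_shock_without_bias by blast

end
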